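(* Let $G=(V,E,\omega)$ be a weighted directed graph, let $\lambda_0$ be an eigenvalue of $M_G$, and let $S$ be a $\lambda_0$-structural set of $G$. Let $u^S=(u^S_i)_{i\in S}$ be an eigenvector of the reduced matrix $R_S(G,\lambda_0)$ with eigenvalue $\lambda_0$. Then the recursive relations $$u_i=u^S_i\ \ (i\in S_0=S),\qquad u_\ell=\sum_{j\in S_{k-1}}\frac{\omega(\ell,j)}{\lambda_0-\omega(\ell,\ell)}\,u_j\ \ \text{for all }\ell\in S_k\setminus S_{k-1},\ k\ge 1,$$ uniquely determine a vector $u=(u_i)_{i\in V}$, and $u$ is an eigenvector of $M_G$ associated to $\lambda_0$ whose restriction to $S$ is $u^S$.
   Context: Let $G=(V,E,\omega)$ be a weighted directed graph with vertex set $V=\{1,\dots,n\}$, edge set $E\subset V\times V$ and weight function $\omega:E\to\mathbb{C}$; set $\omega(i,j)=0$ whenever $(i,j)\notin E$. Its weighted adjacency matrix is $M_G=(\omega(i,j))_{i,j\in V}$ (acting on column vectors, so $(M_Gu)_i=\sum_j\omega(i,j)u_j$). A path is a sequence $(i_0,\dots,i_p)$ with $p\ge 1$ and $(i_\ell,i_{\ell+1})\in E$ for $0\le \ell\le p-1$, whose vertices are pairwise distinct except that possibly $i_0=i_p$; if $i_0=i_p$ the path is a cycle, and a cycle with $p=1$ is a loop. For $S\subset V$ write $\overline S=V\setminus S$. Given $\lambda\in\mathbb{C}$, a nonempty set $S\subset V$ is a $\lambda$-structural set of $G$ if (i) every cycle of $G$ that is not a loop contains a vertex of $S$, and (ii)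 $\omega(i,i)\neq\lambda$ for every $i\in\overline S$. A branch of $(G,S)$ is a path $\beta=(i_0,i_1,\dots,i_p)$ whose interior vertices $i_1,\dots,i_{p-1}$ all lie in $\overline S$; $\mathscr B_{ij}$ denotes the set of branches with $i_0=i$ and $i_p=j$. The weight of a branch is $\omega(\beta,\lambda)=\omega(i_0,i_1)\prod_{\ell=1}^{p-1}\frac{\omega(i_\ell,i_{\ell+1})}{\lambda-\omega(i_\ell,i_\ell)}$. For $i,j\in S$ set $R_{ij}(G,S,\lambda)=\sum_{\beta\in\mathscr B_{ij}}\omega(\beta,\lambda)$; the reduced matrix $R_S(G,\lambda)$ is the $S\times S$ matrix with entries $R_{ij}(G,S,\lambda)$, $i,j\in S$. Depth of a vertex (relative to $S$), defined recursively: every $i\in S$ has depth $0$; a vertex $i\in\overline S$ has depth $k\ge1$ iff it has no depth less than $k$ and every $j\neq i$ with $(i,j)\in E$ has depth $<k$. Since $S$ is structural, every vertex has a finite depth. $S_k$ denotes the set of vertices of depth $\le k$. *)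

theory Defs
  imports Complex_Main "Jordan_Normal_Form.Char_Poly"
begin

definition wdigraph :: "nat \<Rightarrow> (nat \<times> nat) set \<Rightarrow> (nat \<Rightarrow> nat \<Rightarrow> complex) \<Rightarrow> bool" where
  "wdigraph n E w \<longleftrightarrow> E \<subseteq> {1..n} \<times> {1..n} \<and> (\<forall>i j. (i, j) \<notin> E \<longrightarrow> w i j = 0)"

text \<open>Weighted adjacency matrix M_G (entry (i,j) of the JNF matrix, 0-based, is w(i+1,j+1)).\<close>
definition adj_mat :: "nat \<Rightarrow> (nat \<Rightarrow> nat \<Rightarrow> complex) \<Rightarrow> complex mat" where
  "adj_mat n w = mat n n (\<lambda>(i, j). w (Suc i) (Suc j))"

definition vec_of_fun :: "nat \<Rightarrow> (nat \<Rightarrow> complex) \<Rightarrow> complex vec" where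
  "vec_of_fun n u = vec n (\<lambda>i. u (Suc i))"

text \<open>A path (i_0,...,i_p), p >= 1, consecutive pairs are edges, vertices pairwise
  distinct except possibly i_0 = i_p.\<close>
definition is_path :: "(nat \<times> nat) set \<Rightarrow> nat list \<Rightarrow> bool" where
  "is_path E xs \<longleftrightarrow> length xs \<ge> 2 \<and> (\<forall>k. Suc k < length xs \<longrightarrow> (xs ! k, xs ! Suc k) \<in> E)
     \<and> distinct (butlast xs) \<and> distinct (tl xs)"

definition is_cycle :: "(nat \<times> nat) set \<Rightarrow> nat list \<Rightarrow> bool" where
  "is_cycle E xs \<longleftrightarrow> is_path E xs \<and> hd xs = last xs"

definition is_loop :: "(nat \<times> nat) set \<Rightarrow> nat list \<Rightarrow> bool" where
  "is_loop E xs \<longleftrightarrow> is_cycle E xs \<and> length xs = 2"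

definition structural_set ::
  "nat \<Rightarrow> (nat \<times> nat) set \<Rightarrow> (nat \<Rightarrow> nat \<Rightarrow> complex) \<Rightarrow> complex \<Rightarrow> nat set \<Rightarrow> bool" where
  "structural_set n E w lam S \<longleftrightarrow> S \<noteq> {} \<and> S \<subseteq> {1..n}
     \<and> (\<forall>xs. is_cycle E xs \<and> \<not> is_loop E xs \<longrightarrow> set xs \<inter> S \<noteq> {})
     \<and> (\<forall>i \<in> {1..n} - S. w i i \<noteq> lam)"

definition is_branch :: "nat \<Rightarrow> (nat \<times> nat) set \<Rightarrow> nat set \<Rightarrow> nat list \<Rightarrow> bool" where
  "is_branch n E S xs \<longleftrightarrow> is_path E xs \<and>
     (\<forall>l. 0 < l \<and> l < length xs - 1 \<longrightarrow> xs ! l \<in> {1..n} - S)"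

definition branches :: "nat \<Rightarrow> (nat \<times> nat) set \<Rightarrow> nat set \<Rightarrow> nat \<Rightarrow> nat \<Rightarrow> nat list set" where
  "branches n E S i j = {xs. is_branch n E S xs \<and> hd xs = i \<and> last xs = j}"

definition branch_weight :: "(nat \<Rightarrow> nat \<Rightarrow> complex) \<Rightarrow> complex \<Rightarrow> nat list \<Rightarrow> complex" where
  "branch_weight w lam xs = w (xs ! 0) (xs ! 1) *
     (\<Prod>l\<in>{1..<length xs - 1}. w (xs ! l) (xs ! Suc l) / (lam - w (xs ! l) (xs ! l)))"

definition reduced_entry ::
  "nat \<Rightarrow> (nat \<times> nat) set \<Rightarrow> (nat \<Rightarrow> nat \<Rightarrow> complex) \<Rightarrow> nat set \<Rightarrow> complex \<Rightarrow> nat \<Rightarrow> nat \<Rightarrow> complex" where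
  "reduced_entry n E w S lam i j = (\<Sum>xs\<in>branches n E S i j. branch_weight w lam xs)"

definition eigvec_on :: "nat set \<Rightarrow> (nat \<Rightarrow> nat \<Rightarrow> complex) \<Rightarrow> complex \<Rightarrow> (nat \<Rightarrow> complex) \<Rightarrow> bool" where
  "eigvec_on S R lam u \<longleftrightarrow> (\<forall>i\<in>S. (\<Sum>j\<in>S. R i j * u j) = lam * u i) \<and> (\<exists>i\<in>S. u i \<noteq> 0)"

fun depth_set :: "nat \<Rightarrow> (nat \<times> nat) set \<Rightarrow> nat set \<Rightarrow> nat \<Rightarrow> nat set" where
  "depth_set n E S 0 = S"
| "depth_set n E S (Suc k) = S \<union>
     {i \<in> {1..n}. \<forall>j. j \<noteq> i \<and> (i, j) \<in> E \<longrightarrow> j \<in> depth_set n E S k}"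

definition rec_rel ::
  "nat \<Rightarrow> (nat \<times> nat) set \<Rightarrow> (nat \<Rightarrow> nat \<Rightarrow> complex) \<Rightarrow> nat set \<Rightarrow> complex
   \<Rightarrow> (nat \<Rightarrow> complex) \<Rightarrow> (nat \<Rightarrow> complex) \<Rightarrow> bool" where
  "rec_rel n E w S lam uS u \<longleftrightarrow> (\<forall>i\<in>S. u i = uS i) \<and>
     (\<forall>k\<ge>1. \<forall>l \<in> depth_set n E S k - depth_set n E S (k - 1).
        u l = (\<Sum>j\<in>depth_set n E S (k - 1). w l j / (lam - w l l) * u j))"

end

theory Submission
  imports Defs "HOL-Library.Transitive_Closure_Table"
begin

text \<open>
  For l outside S the row l of M_G u = lam u reads u_l = sum over m \<noteq> l of w(l,m)/(lam - w(l,l)) u_m,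
  and these equations are the recursive relations, because a vertex of depth k only points to
  vertices of depth less than k (or to itself). Since S meets every cycle that is not a loop, the
  edges between distinct vertices outside S form a finite acyclic, hence well-founded, relation,
  so the equations determine u from u^S. Their solution is u_l = sum over j \<in> S of T(l,j) u^S_j,
  where T(l,j) sums the weights of the simple paths from l to j whose vertices other than j lie
  outside S. Prefixing an edge i \<rightarrow> m to these paths gives exactly the branches from i to j, so
  for i \<in> S the row i of M_G u equals the row i of R_S(G, lam) u^S, which is lam u^S_i.
\<close>

lemma hd_in_set_butlast: "butlast xs \<noteq> [] \<Longrightarrow> hd xs \<in> set (butlast xs)"
  by (cases xs) auto

lemma in_set_butlast_if_ne_last: "x \<in> set xs \<Longrightarrow> x \<noteq> last xs \<Longrightarrow> x \<in> set (butlast xs)"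
  by (induction xs) (auto split: if_splits)

lemma last_notin_set_butlast: "distinct xs \<Longrightarrow> xs \<noteq> [] \<Longrightarrow> last xs \<notin> set (butlast xs)"
  by (metis append_butlast_last_id distinct_append disjoint_iff list.set_intros(1))

lemma set_successively_subset: "successively P xs \<Longrightarrow> set xs \<subseteq> insert (hd xs) {y. \<exists>x. P x y}"
  by (induction xs) (auto simp: successively_Cons)

lemma sum_Cons_UNION:
  assumes "finite M" and "\<And>m. m \<in> M \<Longrightarrow> finite (A m)"
    and "\<And>m ys. m \<in> M \<Longrightarrow> ys \<in> A m \<Longrightarrow> hd ys = m"
  shows "sum f (Cons a ` (\<Union>m\<in>M. A m)) = (\<Sum>m\<in>M. \<Sum>ys\<in>A m. f (a # ys))"
proof -
  have "sum f (Cons a ` (\<Union>m\<in>M. A m)) = (\<Sum>ys\<in>(\<Union>m\<in>M. A m). f (a # ys))"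
    by (subst sum.reindex) auto
  also have "\<dots> = (\<Sum>m\<in>M. \<Sum>ys\<in>A m. f (a # ys))"
    by (rule sum.UNION_disjoint) (use assms in blast)+
  finally show ?thesis .
qed

lemma is_path_iff_successively:
  "is_path E xs \<longleftrightarrow> length xs \<ge> 2 \<and> successively (\<lambda>a b. (a, b) \<in> E) xs
     \<and> distinct (butlast xs) \<and> distinct (tl xs)"
  by (simp add: is_path_def successively_conv_nth)

lemma Cons_interior_subset_iff:
  "(\<forall>l. 0 < l \<and> l < length (x # ys) - 1 \<longrightarrow> (x # ys) ! l \<in> A) \<longleftrightarrow> set (butlast ys) \<subseteq> A"
proof
  assume interior: "\<forall>l. 0 < l \<and> l < length (x # ys) - 1 \<longrightarrow> (x # ys) ! l \<in> A"
  have "butlast ys ! k \<in> A" if "k < length (butlast ys)" for k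
    using that interior[rule_format, of "Suc k"] by (simp add: nth_butlast)
  then show "set (butlast ys) \<subseteq> A" by (auto simp: in_set_conv_nth)
next
  assume "set (butlast ys) \<subseteq> A"
  then show "\<forall>l. 0 < l \<and> l < length (x # ys) - 1 \<longrightarrow> (x # ys) ! l \<in> A"
    by (auto simp: gr0_conv_Suc nth_butlast[symmetric])
qed

fun tail_weight :: "(nat \<Rightarrow> nat \<Rightarrow> complex) \<Rightarrow> complex \<Rightarrow> nat list \<Rightarrow> complex" where
  "tail_weight w lam (a # b # ys) = w a b / (lam - w a a) * tail_weight w lam (b # ys)"
| "tail_weight w lam _ = 1"

lemma tail_weight_Cons:
  "ys \<noteq> [] \<Longrightarrow> tail_weight w lam (a # ys) = w a (hd ys) / (lam - w a a) * tail_weight w lam ys"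
  by (cases ys) auto

lemma tail_weight_conv_prod:
  "tail_weight w lam ys = (\<Prod>l<length ys - 1. w (ys ! l) (ys ! Suc l) / (lam - w (ys ! l) (ys ! l)))"
  by (induction w lam ys rule: tail_weight.induct) (simp_all add: prod.lessThan_Suc_shift del: prod.lessThan_Suc)

lemma branch_weight_Cons:
  assumes "ys \<noteq> []"
  shows "branch_weight w lam (i # ys) = w i (hd ys) * tail_weight w lam ys"
proof -
  have "{1..<length (i # ys) - 1} = Suc ` {..<length ys - 1}"
    using assms by (simp add: lessThan_atLeast0)
  then show ?thesis
    using assms by (simp add: branch_weight_def tail_weight_conv_prod prod.reindex hd_conv_nth)
qed

lemma eigenvector_adj_matI:
  assumes "i \<in> {1..n}" and "u i \<noteq> 0"
    and rows: "\<And>l. l \<in> {1..n} \<Longrightarrow> (\<Sum>m\<in>{1..n}. w l m * u m) = lam * u l"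
  shows "eigenvector (adj_mat n w) (vec_of_fun n u) lam"
  unfolding eigenvector_def
proof (intro conjI)
  show "vec_of_fun n u \<in> carrier_vec (dim_row (adj_mat n w))"
    by (simp add: vec_of_fun_def adj_mat_def)
  have "vec_of_fun n u $ (i - 1) = u i" and "i - 1 < n"
    using assms(1) by (auto simp: vec_of_fun_def)
  then show "vec_of_fun n u \<noteq> 0\<^sub>v (dim_row (adj_mat n w))"
    using assms(2) by (auto simp: adj_mat_def)
  show "adj_mat n w *\<^sub>v vec_of_fun n u = lam \<cdot>\<^sub>v vec_of_fun n u"
  proof (rule eq_vecI)
    fix k assume "k < dim_vec (lam \<cdot>\<^sub>v vec_of_fun n u)"
    then have k: "k < n" by (simp add: vec_of_fun_def)
    have "(adj_mat n w *\<^sub>v vec_of_fun n u) $ k = (\<Sum>j<n. w (Suc k) (Suc j) * u (Suc j))"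
      using k by (simp add: adj_mat_def vec_of_fun_def scalar_prod_def lessThan_atLeast0)
    also have "\<dots> = (\<Sum>m\<in>{Suc 0..<Suc n}. w (Suc k) m * u m)"
      by (simp only: lessThan_atLeast0 sum.shift_bounds_Suc_ivl)
    also have "{Suc 0..<Suc n} = {1..n}" by auto
    also have "(\<Sum>m\<in>{1..n}. w (Suc k) m * u m) = (lam \<cdot>\<^sub>v vec_of_fun n u) $ k"
      using k rows[of "Suc k"] by (simp add: vec_of_fun_def)
    finally show "(adj_mat n w *\<^sub>v vec_of_fun n u) $ k = (lam \<cdot>\<^sub>v vec_of_fun n u) $ k" .
  qed (simp add: adj_mat_def vec_of_fun_def)
qed

locale structural_graph =
  fixes n :: nat and E :: "(nat \<times> nat) set" and w :: "nat \<Rightarrow> nat \<Rightarrow> complex"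
    and lam :: complex and S :: "nat set"
  assumes graph: "wdigraph n E w"
    and structural: "structural_set n E w lam S"
begin

abbreviation V :: "nat set" where "V \<equiv> {1..n}"

lemma edges_subset: "E \<subseteq> V \<times> V"
  using graph by (simp add: wdigraph_def)

lemma edge_if_weight_nonzero: "w i j \<noteq> 0 \<Longrightarrow> (i, j) \<in> E"
  using graph by (auto simp: wdigraph_def)

lemma S_subset: "S \<subseteq> V"
  using structural by (simp add: structural_set_def)

lemma finite_S: "finite S"
  using S_subset finite_subset by blast

lemma cycle_meets_S: "is_cycle E xs \<Longrightarrow> \<not> is_loop E xs \<Longrightarrow> set xs \<inter> S \<noteq> {}"
  using structural by (simp add: structural_set_def)

lemma diagonal_ne_eigenvalue: "i \<in> V - S \<Longrightarrow> w i i \<noteq> lam"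
  using structural unfolding structural_set_def by blast

definition inner_edges :: "(nat \<times> nat) set" where
  "inner_edges = {(l, m) \<in> E. l \<notin> S \<and> m \<notin> S \<and> l \<noteq> m}"

lemma inner_path_closes_to_cycle:
  assumes xm: "(x, m) \<in> inner_edges"
    and p: "rtrancl_path (\<lambda>a b. (a, b) \<in> inner_edges) m ys x" and dist: "distinct (m # ys)"
  shows "is_cycle E (x # m # ys)" and "\<not> is_loop E (x # m # ys)"
proof -
  have "ys \<noteq> []"
    using p xm by (auto simp: inner_edges_def elim: rtrancl_path.cases)
  then have last_ys: "last (m # ys) = x"
    using p by (simp add: rtrancl_path_last)
  have "((x # m # ys) ! k, (x # m # ys) ! Suc k) \<in> E" if "Suc k < length (x # m # ys)" for k
    using that xm rtrancl_path_nth[OF p, of "k - 1"] by (cases k) (auto simp: inner_edges_def)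
  moreover have "distinct (butlast (x # m # ys))"
    using dist last_ys \<open>ys \<noteq> []\<close> last_notin_set_butlast[OF dist]
    by (auto simp: distinct_butlast dest: in_set_butlastD)
  ultimately have "is_path E (x # m # ys)"
    using dist by (simp add: is_path_def)
  then show "is_cycle E (x # m # ys)" and "\<not> is_loop E (x # m # ys)"
    using last_ys \<open>ys \<noteq> []\<close> by (simp_all add: is_cycle_def is_loop_def)
qed

lemma acyclic_inner_edges: "acyclic inner_edges"
proof (rule acyclicI, intro allI notI)
  fix x assume "(x, x) \<in> inner_edges\<^sup>+"
  then obtain m where xm: "(x, m) \<in> inner_edges" and "(m, x) \<in> inner_edges\<^sup>*"
    by (meson tranclD)
  then have "(\<lambda>a b. (a, b) \<in> inner_edges)\<^sup>*\<^sup>* m x"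
    by (simp add: rtranclp_rtrancl_eq)
  then obtain ys0 where "rtrancl_path (\<lambda>a b. (a, b) \<in> inner_edges) m ys0 x"
    by (auto simp: rtranclp_eq_rtrancl_path)
  then obtain ys where p: "rtrancl_path (\<lambda>a b. (a, b) \<in> inner_edges) m ys x"
    and dist: "distinct (m # ys)"
    by (rule rtrancl_path_distinct)
  have "set (x # m # ys) \<inter> S = {}"
    using xm rtrancl_path_Range[OF p] by (auto simp: inner_edges_def)
  then show False
    using cycle_meets_S inner_path_closes_to_cycle[OF xm p dist] by blast
qed

lemma inner_edges_induct [case_names step]:
  assumes "\<And>l. (\<And>m. (l, m) \<in> inner_edges \<Longrightarrow> P m) \<Longrightarrow> P l"
  shows "P l"
proof -
  have "finite inner_edges"
    by (rule finite_subset[of _ "V \<times> V"]) (use edges_subset in \<open>auto simp: inner_edges_def\<close>)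
  then have "wf (inner_edges\<inverse>)"
    using acyclic_inner_edges by (rule finite_acyclic_wf_converse)
  then show ?thesis
    by (induction rule: wf_induct_rule) (use assms in blast)
qed

definition tails :: "nat \<Rightarrow> nat \<Rightarrow> nat list set" where
  "tails l j = {ys. ys \<noteq> [] \<and> hd ys = l \<and> last ys = j \<and> successively (\<lambda>a b. (a, b) \<in> E) ys
     \<and> distinct ys \<and> set (butlast ys) \<subseteq> V - S}"

lemma finite_tails: "finite (tails l j)"
proof (rule finite_subset)
  have "set ys \<subseteq> insert l V" if "ys \<in> tails l j" for ys
  proof -
    have "set ys \<subseteq> insert l {b. \<exists>a. (a, b) \<in> E}"
      using that set_successively_subset[of "\<lambda>a b. (a, b) \<in> E" ys] by (simp add: tails_def)
    then show ?thesis using edges_subset by blast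
  qed
  then show "tails l j \<subseteq> {ys. set ys \<subseteq> insert l V \<and> distinct ys}"
    by (auto simp: tails_def)
  show "finite {ys. set ys \<subseteq> insert l V \<and> distinct ys}"
    by (rule finite_subset_distinct) simp
qed

lemma tails_from_S:
  assumes "m \<in> S"
  shows "tails m j = (if m = j then {[m]} else {})"
proof -
  have "ys = [m]" if "ys \<in> tails m j" for ys
  proof -
    have "butlast ys = []"
      using that assms hd_in_set_butlast[of ys] by (auto simp: tails_def)
    then show ?thesis using that by (cases ys) (auto simp: tails_def split: if_splits)
  qed
  then have "tails m j \<subseteq> {[m]}" by blast
  moreover have "[m] \<in> tails m j \<longleftrightarrow> m = j" by (auto simp: tails_def)
  ultimately show ?thesis by (auto simp: subset_singleton_iff)
qed

lemma inner_reachable_butlast: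
  assumes "successively (\<lambda>a b. (a, b) \<in> E) ys" "distinct ys" "set (butlast ys) \<subseteq> V - S"
    and "z \<in> set (butlast ys)"
  shows "(hd ys, z) \<in> inner_edges\<^sup>*"
  using assms
proof (induction ys)
  case (Cons a ys)
  show ?case
  proof (cases "z = a")
    case False
    have "ys \<noteq> []" using Cons.prems(4) by auto
    then have butlast_Cons: "butlast (a # ys) = a # butlast ys" by simp
    have z: "z \<in> set (butlast ys)" using Cons.prems(4) False butlast_Cons by simp
    then have "hd ys \<in> set (butlast ys)" by (intro hd_in_set_butlast) auto
    moreover have "(a, hd ys) \<in> E" and "successively (\<lambda>a b. (a, b) \<in> E) ys"
      using Cons.prems(1) \<open>ys \<noteq> []\<close> by (simp_all add: successively_Cons)
    moreover have "a \<notin> set ys" "distinct ys" using Cons.prems(2) by simp_all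
    moreover have "a \<in> V - S" "set (butlast ys) \<subseteq> V - S"
      using Cons.prems(3) butlast_Cons by simp_all
    ultimately have "(a, hd ys) \<in> inner_edges" and "(hd ys, z) \<in> inner_edges\<^sup>*"
      using Cons.IH z by (auto simp: inner_edges_def dest: in_set_butlastD)
    then show ?thesis by (simp add: converse_rtrancl_into_rtrancl)
  qed simp
qed simp

lemma Cons_in_tails_iff:
  assumes "ys \<noteq> []"
  shows "l # ys \<in> tails l j \<longleftrightarrow>
    ys \<in> tails (hd ys) j \<and> (l, hd ys) \<in> E \<and> l \<in> V - S \<and> l \<notin> set ys"
  using assms by (auto simp: tails_def successively_Cons)

lemma tails_Cons:
  assumes l: "l \<in> V - S" and j: "j \<in> S"
  shows "tails l j = Cons l ` (\<Union>m\<in>{m \<in> V. m \<noteq> l \<and> (l, m) \<in> E}. tails m j)"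
proof (intro equalityI subsetI)
  fix ys assume ys: "ys \<in> tails l j"
  have "ys = l # tl ys \<and> tl ys \<noteq> []"
    using ys l j by (cases ys) (auto simp: tails_def)
  then obtain ys' where ys_eq: "ys = l # ys'" and "ys' \<noteq> []" by blast
  then have "ys' \<in> tails (hd ys') j" "(l, hd ys') \<in> E" "l \<notin> set ys'"
    using ys Cons_in_tails_iff by simp_all
  moreover from this have "hd ys' \<in> V" "hd ys' \<noteq> l"
    using edges_subset \<open>ys' \<noteq> []\<close> by auto
  ultimately show "ys \<in> Cons l ` (\<Union>m\<in>{m \<in> V. m \<noteq> l \<and> (l, m) \<in> E}. tails m j)"
    unfolding ys_eq by blast
next
  fix ys assume "ys \<in> Cons l ` (\<Union>m\<in>{m \<in> V. m \<noteq> l \<and> (l, m) \<in> E}. tails m j)"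
  then obtain m ys' where ys: "ys = l # ys'" and m: "m \<in> V" "m \<noteq> l" "(l, m) \<in> E"
    and ys': "ys' \<in> tails m j" by auto
  have "l \<notin> set ys'"
  proof
    assume "l \<in> set ys'"
    moreover have "l \<noteq> last ys'" using ys' l j by (auto simp: tails_def)
    ultimately have l_butlast: "l \<in> set (butlast ys')" by (rule in_set_butlast_if_ne_last)
    then have "hd ys' \<in> set (butlast ys')" by (intro hd_in_set_butlast) auto
    then have "m \<in> V - S" using ys' by (auto simp: tails_def)
    then have "(l, m) \<in> inner_edges" using l m by (auto simp: inner_edges_def)
    moreover have "(m, l) \<in> inner_edges\<^sup>*"
      using inner_reachable_butlast[of ys' l] ys' l_butlast by (auto simp: tails_def)
    ultimately have "(l, l) \<in> inner_edges\<^sup>+" by (rule rtrancl_into_trancl2)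
    then show False using acyclic_inner_edges by (simp add: acyclic_def)
  qed
  moreover have "ys' \<noteq> []" "hd ys' = m" using ys' by (simp_all add: tails_def)
  ultimately show "ys \<in> tails l j"
    using ys' m l Cons_in_tails_iff unfolding ys by simp
qed

lemma Cons_in_branches_iff:
  assumes "i \<in> S" and "ys \<noteq> []"
  shows "i # ys \<in> branches n E S i j \<longleftrightarrow> ys \<in> tails (hd ys) j \<and> (i, hd ys) \<in> E"
proof -
  have "set (butlast ys) \<subseteq> V - S \<Longrightarrow> i \<notin> set (butlast ys)" using assms(1) by blast
  then show ?thesis
    using assms(2)
    unfolding branches_def mem_Collect_eq is_branch_def Cons_interior_subset_iff is_path_iff_successively
    by (auto simp: tails_def successively_Cons distinct_butlast Suc_le_eq)
qed

lemma branches_conv_tails: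
  assumes "i \<in> S"
  shows "branches n E S i j = Cons i ` (\<Union>m\<in>{m \<in> V. (i, m) \<in> E}. tails m j)"
proof (intro equalityI subsetI)
  fix xs assume xs: "xs \<in> branches n E S i j"
  then have "xs = i # tl xs \<and> tl xs \<noteq> []"
    by (cases xs) (auto simp: branches_def is_branch_def is_path_def)
  then obtain ys where xs_eq: "xs = i # ys" and "ys \<noteq> []" by blast
  then have "ys \<in> tails (hd ys) j" "(i, hd ys) \<in> E"
    using xs Cons_in_branches_iff[OF assms] by simp_all
  moreover from this have "hd ys \<in> V" using edges_subset by auto
  ultimately show "xs \<in> Cons i ` (\<Union>m\<in>{m \<in> V. (i, m) \<in> E}. tails m j)"
    unfolding xs_eq by blast
next
  fix xs assume "xs \<in> Cons i ` (\<Union>m\<in>{m \<in> V. (i, m) \<in> E}. tails m j)"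
  then obtain m ys where "xs = i # ys" "(i, m) \<in> E" "ys \<in> tails m j" by auto
  moreover from this have "ys \<noteq> []" "hd ys = m" by (simp_all add: tails_def)
  ultimately show "xs \<in> branches n E S i j"
    using Cons_in_branches_iff[OF assms] by simp
qed

definition tail_sum :: "nat \<Rightarrow> nat \<Rightarrow> complex" where
  "tail_sum l j = (\<Sum>ys\<in>tails l j. tail_weight w lam ys)"

lemma tail_sum_from_S: "m \<in> S \<Longrightarrow> tail_sum m j = (if m = j then 1 else 0)"
  by (simp add: tail_sum_def tails_from_S)

lemma sum_Cons_tails:
  assumes "M \<subseteq> V" and "\<And>m ys. m \<in> M \<Longrightarrow> ys \<in> tails m j \<Longrightarrow> f (a # ys) = c m * tail_weight w lam ys"
  shows "(\<Sum>ys\<in>Cons a ` (\<Union>m\<in>M. tails m j). f ys) = (\<Sum>m\<in>M. c m * tail_sum m j)"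
proof -
  have "(\<Sum>ys\<in>Cons a ` (\<Union>m\<in>M. tails m j). f ys) = (\<Sum>m\<in>M. \<Sum>ys\<in>tails m j. f (a # ys))"
    using assms(1) finite_subset by (intro sum_Cons_UNION finite_tails) (auto simp: tails_def)
  also have "\<dots> = (\<Sum>m\<in>M. c m * tail_sum m j)"
    using assms(2) by (simp add: tail_sum_def sum_distrib_left)
  finally show ?thesis .
qed

lemma tail_sum_step:
  assumes l: "l \<in> V - S" and j: "j \<in> S"
  shows "tail_sum l j = (\<Sum>m\<in>V - {l}. w l m / (lam - w l l) * tail_sum m j)"
proof -
  have "tail_sum l j = (\<Sum>m\<in>{m \<in> V. m \<noteq> l \<and> (l, m) \<in> E}. w l m / (lam - w l l) * tail_sum m j)"
    unfolding tail_sum_def[of l] tails_Cons[OF l j]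
    by (rule sum_Cons_tails) (auto simp: tails_def tail_weight_Cons)
  also have "\<dots> = (\<Sum>m\<in>V - {l}. w l m / (lam - w l l) * tail_sum m j)"
    by (rule sum.mono_neutral_left) (auto dest: edge_if_weight_nonzero)
  finally show ?thesis .
qed

lemma reduced_entry_conv_tail_sum:
  assumes "i \<in> S"
  shows "reduced_entry n E w S lam i j = (\<Sum>m\<in>V. w i m * tail_sum m j)"
proof -
  have "reduced_entry n E w S lam i j = (\<Sum>m\<in>{m \<in> V. (i, m) \<in> E}. w i m * tail_sum m j)"
    unfolding reduced_entry_def branches_conv_tails[OF assms]
    by (rule sum_Cons_tails) (auto simp: tails_def branch_weight_Cons)
  also have "\<dots> = (\<Sum>m\<in>V. w i m * tail_sum m j)"
    by (rule sum.mono_neutral_left) (auto dest: edge_if_weight_nonzero)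
  finally show ?thesis .
qed

definition eigen_equations_off_S :: "(nat \<Rightarrow> complex) \<Rightarrow> (nat \<Rightarrow> complex) \<Rightarrow> bool" where
  "eigen_equations_off_S uS u \<longleftrightarrow> (\<forall>i\<in>S. u i = uS i) \<and>
     (\<forall>l\<in>V - S. u l = (\<Sum>m\<in>V - {l}. w l m / (lam - w l l) * u m))"

lemma depth_set_subset: "depth_set n E S k \<subseteq> V"
  using S_subset by (cases k) auto

lemma S_subset_depth_set: "S \<subseteq> depth_set n E S k"
  by (cases k) auto

lemma depth_set_mono: "k \<le> k' \<Longrightarrow> depth_set n E S k \<subseteq> depth_set n E S k'"
proof (rule lift_Suc_mono_le[of "depth_set n E S"])
  show "depth_set n E S k \<subseteq> depth_set n E S (Suc k)" for k
    by (induction k) (simp, simp only: depth_set.simps, blast)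
qed

lemma finite_subset_depth_set:
  assumes "N \<subseteq> \<Union> (range (depth_set n E S))" and "finite N"
  obtains K where "N \<subseteq> depth_set n E S K"
proof -
  have "depth_set n E S a \<subseteq> depth_set n E S b \<or> depth_set n E S b \<subseteq> depth_set n E S a" for a b
    using depth_set_mono nat_le_linear by blast
  then have "subset.chain (range (depth_set n E S)) (range (depth_set n E S))"
    unfolding subset_chain_def by blast
  then show thesis
    using assms that by (auto elim: finite_subset_Union_chain)
qed

lemma depth_set_exhaustive: "l \<in> V \<Longrightarrow> \<exists>k. l \<in> depth_set n E S k"
proof (induction l rule: inner_edges_induct)
  case (step l)
  show ?case
  proof (cases "l \<in> S")
    case True
    then show ?thesis using S_subset_depth_set by blast
  next
    case False
    let ?N = "{m. m \<noteq> l \<and> (l, m) \<in> E}"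
    have "?N \<subseteq> \<Union> (range (depth_set n E S))"
    proof
      fix m assume m: "m \<in> ?N"
      show "m \<in> \<Union> (range (depth_set n E S))"
      proof (cases "m \<in> S")
        case True
        then show ?thesis using S_subset_depth_set by blast
      next
        case False
        then have "(l, m) \<in> inner_edges" using m \<open>l \<notin> S\<close> by (simp add: inner_edges_def)
        moreover have "m \<in> V" using m edges_subset by auto
        ultimately show ?thesis using step.IH by blast
      qed
    qed
    moreover have "finite ?N"
      by (rule finite_subset[of _ V]) (use edges_subset in auto)
    ultimately obtain K where "?N \<subseteq> depth_set n E S K"
      by (rule finite_subset_depth_set)
    then have "l \<in> depth_set n E S (Suc K)" using step.prems by auto
    then show ?thesis ..
  qed
qed

lemma depth_layer_exists:
  assumes "l \<in> V - S"
  obtains k where "l \<in> depth_set n E S (Suc k) - depth_set n E S k"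
proof -
  obtain k where "l \<in> depth_set n E S k" using assms depth_set_exhaustive by blast
  moreover have "l \<notin> depth_set n E S 0" using assms by simp
  ultimately obtain k' where "\<forall>i\<le>k'. l \<notin> depth_set n E S i" "l \<in> depth_set n E S (Suc k')"
    using ex_least_nat_less[of "\<lambda>k. l \<in> depth_set n E S k"] by blast
  then show thesis using that by blast
qed

lemma sum_depth_layer:
  assumes l: "l \<in> depth_set n E S (Suc k) - depth_set n E S k"
    and zero: "\<And>m. w l m = 0 \<Longrightarrow> g m = 0"
  shows "(\<Sum>j\<in>depth_set n E S k. g j) = (\<Sum>m\<in>V - {l}. g m)"
proof (rule sum.mono_neutral_left)
  show "depth_set n E S k \<subseteq> V - {l}" using depth_set_subset l by blast
  have "l \<notin> S" using l S_subset_depth_set by blast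
  then have "m \<in> depth_set n E S k" if "m \<noteq> l" "(l, m) \<in> E" for m
    using l that by auto
  then show "\<forall>m\<in>V - {l} - depth_set n E S k. g m = 0"
    using zero edge_if_weight_nonzero by blast
qed simp

lemma rec_rel_iff_eigen_equations_off_S:
  "rec_rel n E w S lam uS u \<longleftrightarrow> eigen_equations_off_S uS u"
proof
  assume rec: "rec_rel n E w S lam uS u"
  have "u l = (\<Sum>m\<in>V - {l}. w l m / (lam - w l l) * u m)" if l: "l \<in> V - S" for l
  proof -
    obtain k where k: "l \<in> depth_set n E S (Suc k) - depth_set n E S k"
      using depth_layer_exists[OF l] .
    then have "u l = (\<Sum>j\<in>depth_set n E S k. w l j / (lam - w l l) * u j)"
      using rec unfolding rec_rel_def
      by (elim conjE allE[where x = "Suc k"]) (simp del: depth_set.simps)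
    also have "\<dots> = (\<Sum>m\<in>V - {l}. w l m / (lam - w l l) * u m)"
      using k by (rule sum_depth_layer) simp
    finally show ?thesis .
  qed
  then show "eigen_equations_off_S uS u"
    using rec by (simp add: rec_rel_def eigen_equations_off_S_def)
next
  assume eqs: "eigen_equations_off_S uS u"
  have "u l = (\<Sum>j\<in>depth_set n E S k. w l j / (lam - w l l) * u j)"
    if l: "l \<in> depth_set n E S (Suc k) - depth_set n E S k" for k l
  proof -
    have "l \<in> V - S" using l depth_set_subset S_subset_depth_set by blast
    then have "u l = (\<Sum>m\<in>V - {l}. w l m / (lam - w l l) * u m)"
      using eqs by (simp add: eigen_equations_off_S_def)
    also have "\<dots> = (\<Sum>j\<in>depth_set n E S k. w l j / (lam - w l l) * u j)"
      using l by (rule sum_depth_layer[symmetric]) simp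
    finally show ?thesis .
  qed
  moreover have "k = Suc (k - 1)" if "k \<ge> 1" for k :: nat
    using that by simp
  ultimately show "rec_rel n E w S lam uS u"
    using eqs unfolding rec_rel_def eigen_equations_off_S_def by metis
qed

lemma eigen_equations_off_S_unique:
  assumes u: "eigen_equations_off_S uS u" and v: "eigen_equations_off_S uS v"
  shows "l \<in> V \<Longrightarrow> u l = v l"
proof (induction l rule: inner_edges_induct)
  case (step l)
  show ?case
  proof (cases "l \<in> S")
    case True
    then show ?thesis using u v by (simp add: eigen_equations_off_S_def)
  next
    case False
    have terms: "w l m / (lam - w l l) * u m = w l m / (lam - w l l) * v m" if m: "m \<in> V - {l}" for m
    proof (cases "w l m = 0")
      case False
      then have "(l, m) \<in> E" by (rule edge_if_weight_nonzero)
      then have "u m = v m"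
        using u v m step.IH \<open>l \<notin> S\<close> by (cases "m \<in> S") (auto simp: eigen_equations_off_S_def inner_edges_def)
      then show ?thesis by simp
    qed simp
    have "u l = (\<Sum>m\<in>V - {l}. w l m / (lam - w l l) * u m)"
      using u step.prems False unfolding eigen_equations_off_S_def by blast
    also have "\<dots> = (\<Sum>m\<in>V - {l}. w l m / (lam - w l l) * v m)"
      using terms by (rule sum.cong[OF refl])
    also have "\<dots> = v l"
      using v step.prems False unfolding eigen_equations_off_S_def by auto
    finally show ?thesis .
  qed
qed

definition tail_extension :: "(nat \<Rightarrow> complex) \<Rightarrow> nat \<Rightarrow> complex" where
  "tail_extension uS l = (if l \<in> V then \<Sum>j\<in>S. tail_sum l j * uS j else 0)"

lemma eigen_equations_off_S_tail_extension: "eigen_equations_off_S uS (tail_extension uS)"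
  unfolding eigen_equations_off_S_def
proof (intro conjI ballI)
  fix i assume i: "i \<in> S"
  then have "tail_extension uS i = (\<Sum>j\<in>S. if i = j then uS j else 0)"
    using S_subset by (auto simp: tail_extension_def tail_sum_from_S intro: sum.cong)
  also have "\<dots> = uS i" using i finite_S by simp
  finally show "tail_extension uS i = uS i" .
next
  fix l assume l: "l \<in> V - S"
  have "tail_extension uS l = (\<Sum>j\<in>S. \<Sum>m\<in>V - {l}. w l m / (lam - w l l) * tail_sum m j * uS j)"
    using l by (simp add: tail_extension_def tail_sum_step sum_distrib_right)
  also have "\<dots> = (\<Sum>m\<in>V - {l}. w l m / (lam - w l l) * tail_extension uS m)"
    by (subst sum.swap) (simp add: tail_extension_def sum_distrib_left mult.assoc)
  finally show "tail_extension uS l = (\<Sum>m\<in>V - {l}. w l m / (lam - w l l) * tail_extension uS m)" .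
qed

lemma reduced_row_tail_extension:
  assumes "i \<in> S"
  shows "(\<Sum>m\<in>V. w i m * tail_extension uS m) = (\<Sum>j\<in>S. reduced_entry n E w S lam i j * uS j)"
proof -
  have "(\<Sum>m\<in>V. w i m * tail_extension uS m) = (\<Sum>m\<in>V. \<Sum>j\<in>S. w i m * tail_sum m j * uS j)"
    by (simp add: tail_extension_def sum_distrib_left mult.assoc)
  also have "\<dots> = (\<Sum>j\<in>S. reduced_entry n E w S lam i j * uS j)"
    using assms by (subst sum.swap) (simp add: reduced_entry_conv_tail_sum sum_distrib_right)
  finally show ?thesis .
qed

lemma eigen_equations_off_S_row:
  assumes uS: "eigvec_on S (reduced_entry n E w S lam) lam uS"
    and u: "eigen_equations_off_S uS u" and l: "l \<in> V"
  shows "(\<Sum>m\<in>V. w l m * u m) = lam * u l"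
proof (cases "l \<in> S")
  case True
  have "(\<Sum>m\<in>V. w l m * u m) = (\<Sum>m\<in>V. w l m * tail_extension uS m)"
    using eigen_equations_off_S_unique[OF u eigen_equations_off_S_tail_extension] by simp
  also have "\<dots> = (\<Sum>j\<in>S. reduced_entry n E w S lam l j * uS j)"
    by (rule reduced_row_tail_extension[OF True])
  also have "\<dots> = lam * uS l"
    using uS True by (simp add: eigvec_on_def)
  also have "\<dots> = lam * u l"
    using u True by (simp add: eigen_equations_off_S_def)
  finally show ?thesis .
next
  case False
  then have "(lam - w l l) * u l = (\<Sum>m\<in>V - {l}. w l m * u m)"
    using u l diagonal_ne_eigenvalue[of l] by (simp add: eigen_equations_off_S_def sum_divide_distrib[symmetric])
  moreover have "(\<Sum>m\<in>V. w l m * u m) = w l l * u l + (\<Sum>m\<in>V - {l}. w l m * u m)"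
    using l by (simp add: sum.remove)
  ultimately show ?thesis by (simp add: algebra_simps)
qed

end

theorem mainTheorem2:
  fixes n :: nat and E :: "(nat \<times> nat) set" and w :: "nat \<Rightarrow> nat \<Rightarrow> complex"
    and lam :: complex and S :: "nat set" and uS :: "nat \<Rightarrow> complex"
  assumes G: "wdigraph n E w"
    and ev: "eigenvalue (adj_mat n w) lam"
    and S: "structural_set n E w lam S"
    and uS: "eigvec_on S (reduced_entry n E w S lam) lam uS"
  shows "(\<exists>!u. rec_rel n E w S lam uS u \<and> (\<forall>i. i \<notin> {1..n} \<longrightarrow> u i = 0))
    \<and> (\<forall>u. rec_rel n E w S lam uS u \<and> (\<forall>i. i \<notin> {1..n} \<longrightarrow> u i = 0) \<longrightarrow>
         eigenvector (adj_mat n w) (vec_of_fun n u) lam \<and> (\<forall>i\<in>S. u i = uS i))"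
proof -
  interpret structural_graph n E w lam S
    using G S by unfold_locales
  note rec_rel_iff = rec_rel_iff_eigen_equations_off_S
  obtain i where i: "i \<in> S" "uS i \<noteq> 0"
    using uS by (auto simp: eigvec_on_def)
  show ?thesis
  proof (intro conjI allI impI)
    show "\<exists>!u. rec_rel n E w S lam uS u \<and> (\<forall>i. i \<notin> V \<longrightarrow> u i = 0)"
    proof (rule ex1I)
      show "rec_rel n E w S lam uS (tail_extension uS) \<and> (\<forall>i. i \<notin> V \<longrightarrow> tail_extension uS i = 0)"
        using eigen_equations_off_S_tail_extension by (simp add: rec_rel_iff tail_extension_def)
      show "u = tail_extension uS" if "rec_rel n E w S lam uS u \<and> (\<forall>i. i \<notin> V \<longrightarrow> u i = 0)" for u
        using that eigen_equations_off_S_unique[OF _ eigen_equations_off_S_tail_extension]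
        by (auto simp: rec_rel_iff tail_extension_def)
    qed
  next
    fix u assume "rec_rel n E w S lam uS u \<and> (\<forall>i. i \<notin> V \<longrightarrow> u i = 0)"
    then have u: "eigen_equations_off_S uS u" by (simp add: rec_rel_iff)
    then have "i \<in> V" "u i \<noteq> 0" using i S_subset by (auto simp: eigen_equations_off_S_def)
    then show "eigenvector (adj_mat n w) (vec_of_fun n u) lam"
      by (rule eigenvector_adj_matI) (rule eigen_equations_off_S_row[OF uS u])
  next
    fix u assume "rec_rel n E w S lam uS u \<and> (\<forall>i. i \<notin> V \<longrightarrow> u i = 0)"
    then show "\<forall>i\<in>S. u i = uS i" by (simp add: rec_rel_def)
  qed
qed

end
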